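(* Let $p_1,\ldots,p_m\in\mathbb Z_{>0}$ and $p=\operatorname{lcm}(p_1,\ldots,p_m)$. Let $\Omega_1,\ldots,\Omega_m$ be words in polynomial letters, $e_1,\ldots,e_m\in\mathbb Z_{\ge0}$, $z\in\mathbb C$, $t\in\mathbb Z_{\ge0}$, $P_1,\ldots,P_t\in\mathbb C[x]$ and $q_1,\ldots,q_t\in\mathbb C$ ($t=0$ allowed). Assume that all polynomial factors appearing are nonzero at the positive integers at which they are evaluated, after all scale changes (each polynomial $Q$ occurring in a letter of $\Omega_j$ satisfies $Q(m/(p/p_j))\ne0$ and each $P_\nu$ satisfies $P_\nu(m/p)\neq0$, for positive integers $m\le pk$), and fix compatible branches of the powers. Then for every positive integer $k$, \[ S(k)=\sum_{n=1}^{k}z^n\prod_{\nu=1}^{t}P_\nu(n)^{q_\nu}\prod_{j=1}^{m}\mathcal P_{\Omega_j}(p_jn)^{e_j}\in\operatorname{span}_{\mathbb C}\{\mathcal P_\Theta(pk)\}_\Theta, \] where $\Theta$ ranges over words in polynomial letters.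
   Context: A polynomial letter is a triple $L=(\boldsymbol\rho,\sigma,\mathbf P)$ with $\boldsymbol\rho=(\rho_1,\ldots,\rho_t)\in\mathbb C^t$, $\sigma\in\mathbb C$, $\mathbf P=(P_1,\ldots,P_t)$, $P_\nu\in\mathbb C[x]$; its value at a positive integer $n$ is $L(n)=\sigma^n\prod_{\nu=1}^tP_\nu(n)^{-\rho_\nu}$ (branches fixed). For a word $\Omega=(L_1,\ldots,L_d)$ of polynomial letters, $\mathcal P_\Omega(N)=\sum_{N\ge n_1>\cdots>n_d\ge1}\prod_{j=1}^dL_j(n_j)$ and $\mathcal P_\emptyset(N)=1$. *)

theory Defs
  imports "HOL-Analysis.Analysis" "HOL-Computational_Algebra.Polynomial"
begin

text \<open>A polynomial letter (rho, sigma, P) is encoded as a pair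
  (sigma, [(rho_1,P_1),...,(rho_t,P_t)]), i.e. the exponent list and the
  polynomial list are zipped together (so they automatically have equal length t).
  Powers with complex exponents use the principal branch (Isabelle's complex powr).\<close>

type_synonym letter = "complex \<times> (complex \<times> complex poly) list"

definition letter_val :: "letter \<Rightarrow> nat \<Rightarrow> complex" where
  "letter_val L n =
     fst L ^ n * (\<Prod>(\<rho>, P) \<leftarrow> snd L. poly P (of_nat n) powr (- \<rho>))"

definition word_val :: "letter list \<Rightarrow> nat \<Rightarrow> complex" where
  "word_val \<Omega> N =
     (\<Sum>ns \<in> {ns :: nat list. length ns = length \<Omega> \<and> sorted_wrt (>) ns
                 \<and> (\<forall>n \<in> set ns. 1 \<le> n \<and> n \<le> N)}.
        \<Prod>j<length \<Omega>. letter_val (\<Omega> ! j) (ns ! j))"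

end

theory Submission
  imports Defs
begin

text \<open>The functions \<open>N \<mapsto> P_\<Theta>(N)\<close> span an algebra over \<open>\<complex>\<close>: a product of two word
  values expands into word values (the quasi-shuffle product, in which two letters may also
  merge into their pointwise product), and the span is closed under the partial sums
  \<open>N \<mapsto> \<Sum>_{m\<le>N} L(m) f(m)\<close> and \<open>N \<mapsto> \<Sum>_{m\<le>N} L(m) f(m-1)\<close> for letters \<open>L\<close>.
  Changes of scale come from multisection: if \<open>s^r = \<sigma>\<close>, the average over the \<open>r\<close>-th roots of
  unity \<open>\<zeta>\<close> of the letters with \<open>\<sigma>\<close> replaced by \<open>s\<zeta>\<close> and every \<open>Q(x)\<close> by \<open>Q(x/r)\<close> equals
  \<open>L(m/r)\<close> when \<open>r\<close> divides \<open>m\<close> and \<open>0\<close> otherwise. Hence \<open>m \<mapsto> P_\<Omega>(\<lfloor>m/r\<rfloor>)\<close> lies in the span,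
  and so does \<open>M \<mapsto> S(\<lfloor>M/p\<rfloor>) = \<Sum>_{m\<le>M, p|m} L_0(m/p) G(m)\<close>, where \<open>L_0(n) = z^n \<Prod> P_\<nu>(n)^q_\<nu>\<close>
  and \<open>G(m) = \<Prod>_j P_\<Omega>_j(\<lfloor>m/(p/p_j)\<rfloor>)^e_j\<close>.\<close>

definition decreasing_tuples :: "nat \<Rightarrow> nat \<Rightarrow> nat list set" where
  "decreasing_tuples d N =
     {ns. length ns = d \<and> sorted_wrt (>) ns \<and> (\<forall>n \<in> set ns. 1 \<le> n \<and> n \<le> N)}"

lemma finite_decreasing_tuples: "finite (decreasing_tuples d N)"
proof (rule finite_subset)
  show "decreasing_tuples d N \<subseteq> {ns. set ns \<subseteq> {1..N} \<and> length ns = d}"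
    unfolding decreasing_tuples_def by auto
qed (rule finite_lists_length_eq, simp)

lemma decreasing_tuples_0: "decreasing_tuples 0 N = {[]}"
  unfolding decreasing_tuples_def by auto

lemma decreasing_tuples_Suc:
  "decreasing_tuples (Suc d) N =
     (\<lambda>(m, ns). m # ns) ` (SIGMA m:{1..N}. decreasing_tuples d (m - 1))"
proof (rule set_eqI)
  fix xs
  show "xs \<in> decreasing_tuples (Suc d) N \<longleftrightarrow>
        xs \<in> (\<lambda>(m, ns). m # ns) ` (SIGMA m:{1..N}. decreasing_tuples d (m - 1))"
    by (cases xs) (auto simp: decreasing_tuples_def image_iff)
qed

lemma word_val_eq_sum_decreasing_tuples:
  "word_val \<Theta> N =
     (\<Sum>ns \<in> decreasing_tuples (length \<Theta>) N. \<Prod>j<length \<Theta>. letter_val (\<Theta> ! j) (ns ! j))"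
  unfolding word_val_def decreasing_tuples_def ..

lemma word_val_Nil [simp]: "word_val [] N = 1"
  by (simp add: word_val_eq_sum_decreasing_tuples decreasing_tuples_0)

lemma word_val_Cons:
  "word_val (L # \<Theta>) N = (\<Sum>m=1..N. letter_val L m * word_val \<Theta> (m - 1))"
proof -
  let ?D = "\<lambda>m. decreasing_tuples (length \<Theta>) (m - 1)"
  let ?f = "\<lambda>ns. \<Prod>j<length (L # \<Theta>). letter_val ((L # \<Theta>) ! j) (ns ! j)"
  have inj: "inj_on (\<lambda>(m, ns). m # ns) (SIGMA m:{1..N}. ?D m)"
    by (auto simp: inj_on_def)
  have "word_val (L # \<Theta>) N = (\<Sum>(m, ns) \<in> (SIGMA m:{1..N}. ?D m). ?f (m # ns))"
    unfolding word_val_eq_sum_decreasing_tuples length_Cons decreasing_tuples_Suc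
    by (rule sum.reindex_cong[OF inj refl]) auto
  also have "\<dots> = (\<Sum>m=1..N. \<Sum>ns \<in> ?D m. ?f (m # ns))"
    by (rule sum.Sigma[symmetric]) (auto simp: finite_decreasing_tuples)
  also have "\<dots> = (\<Sum>m=1..N. letter_val L m * word_val \<Theta> (m - 1))"
    by (simp add: word_val_eq_sum_decreasing_tuples sum_distrib_left prod.lessThan_Suc_shift
        del: prod.lessThan_Suc)
  finally show ?thesis .
qed

lemma word_val_Cons_0 [simp]: "word_val (L # \<Theta>) 0 = 0"
  by (simp add: word_val_Cons)

lemma word_val_Cons_Suc:
  "word_val (L # \<Theta>) (Suc N) = word_val (L # \<Theta>) N + letter_val L (Suc N) * word_val \<Theta> N"
  by (simp add: word_val_Cons)

inductive in_span :: "('a \<Rightarrow> 'i \<Rightarrow> 'b::semiring_1) \<Rightarrow> ('i \<Rightarrow> 'b) \<Rightarrow> bool" for B where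
  zero: "in_span B (\<lambda>N. 0)"
| add_basis: "in_span B h \<Longrightarrow> in_span B (\<lambda>N. c * B x N + h N)"

abbreviation word_span :: "(nat \<Rightarrow> complex) \<Rightarrow> bool" where
  "word_span \<equiv> in_span word_val"

abbreviation letter_span :: "(nat \<Rightarrow> complex) \<Rightarrow> bool" where
  "letter_span \<equiv> in_span letter_val"

lemma in_span_basis: "in_span B (B x)"
  using in_span.add_basis[OF in_span.zero, of B 1 x] by simp

lemma in_span_add:
  assumes "in_span B f" "in_span B g"
  shows "in_span B (\<lambda>N. f N + g N)"
  using assms(1)
proof induction
  case zero
  show ?case using assms(2) by simp
next
  case (add_basis h c x)
  then show ?case
    using in_span.add_basis[OF add_basis.IH, of c x] by (simp add: add.assoc)
qed

lemma in_span_scale: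
  assumes "in_span B f"
  shows "in_span B (\<lambda>N. c * f N)"
  using assms
proof induction
  case zero
  show ?case by (simp add: in_span.zero)
next
  case (add_basis h d x)
  then show ?case
    using in_span.add_basis[OF add_basis.IH, of "c * d" x] by (simp add: distrib_left mult.assoc)
qed

lemma in_span_sum:
  "finite A \<Longrightarrow> (\<And>i. i \<in> A \<Longrightarrow> in_span B (f i)) \<Longrightarrow> in_span B (\<lambda>N. \<Sum>i\<in>A. f i N)"
  by (induction A rule: finite_induct) (simp_all add: in_span.zero in_span_add)

lemma in_span_linear_image:
  assumes "in_span B f"
    and T_zero: "T (\<lambda>N. 0) = (\<lambda>N. 0)"
    and linear: "\<And>c g h. T (\<lambda>N. c * g N + h N) = (\<lambda>N. c * T g N + T h N)"
    and basis: "\<And>x. in_span B' (T (B x))"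
  shows "in_span B' (T f)"
  using assms(1)
proof induction
  case zero
  show ?case by (simp add: T_zero in_span.zero)
next
  case (add_basis h c x)
  have "in_span B' (\<lambda>N. c * T (B x) N + T h N)"
    using add_basis.IH basis by (intro in_span_add in_span_scale)
  then show ?case by (simp only: linear)
qed

lemma in_spanE:
  assumes "in_span B f"
  obtains cs where "\<And>N. f N = (\<Sum>(c, x) \<leftarrow> cs. c * B x N)"
proof -
  from assms have "\<exists>cs. \<forall>N. f N = (\<Sum>(c, x) \<leftarrow> cs. c * B x N)"
  proof induction
    case zero
    show ?case by (rule exI[of _ "[]"]) simp
  next
    case (add_basis h c x)
    then obtain cs where "\<forall>N. h N = (\<Sum>(c, x) \<leftarrow> cs. c * B x N)" by blast
    then show ?case by (intro exI[of _ "(c, x) # cs"]) simp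
  qed
  then show ?thesis using that by blast
qed

lemma word_span_const: "word_span (\<lambda>N. c)"
  using in_span_scale[OF in_span_basis[of word_val "[]"], of c] by simp

lemma word_span_strict_sum_letter:
  assumes "word_span h"
  shows "word_span (\<lambda>M. \<Sum>m=1..M. letter_val L m * h (m - 1))"
  using assms
proof (rule in_span_linear_image[where T = "\<lambda>h M. \<Sum>m=1..M. letter_val L m * h (m - 1)"])
  show "word_span (\<lambda>M. \<Sum>m=1..M. letter_val L m * word_val \<Theta> (m - 1))" for \<Theta>
    using in_span_basis[of word_val "L # \<Theta>"] unfolding word_val_Cons[abs_def] .
qed (simp_all add: fun_eq_iff algebra_simps sum.distrib sum_distrib_left)

lemma word_span_strict_sum:
  assumes "letter_span a" "word_span h"
  shows "word_span (\<lambda>M. \<Sum>m=1..M. a m * h (m - 1))"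
  using assms(1)
proof (rule in_span_linear_image[where T = "\<lambda>a M. \<Sum>m=1..M. a m * h (m - 1)"])
  show "word_span (\<lambda>M. \<Sum>m=1..M. letter_val L m * h (m - 1))" for L
    using assms(2) by (rule word_span_strict_sum_letter)
qed (simp_all add: fun_eq_iff algebra_simps sum.distrib sum_distrib_left)

definition letter_mul :: "letter \<Rightarrow> letter \<Rightarrow> letter" where
  "letter_mul L M = (fst L * fst M, snd L @ snd M)"

lemma letter_val_letter_mul: "letter_val (letter_mul L M) n = letter_val L n * letter_val M n"
  unfolding letter_mul_def letter_val_def by (simp add: power_mult_distrib)

lemma word_val_quasi_shuffle:
  "word_val (L # \<Theta>) N * word_val (M # \<Phi>) N =
     (\<Sum>m=1..N. letter_val L m * (word_val \<Theta> (m - 1) * word_val (M # \<Phi>) (m - 1))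
              + letter_val M m * (word_val (L # \<Theta>) (m - 1) * word_val \<Phi> (m - 1))
              + letter_val (letter_mul L M) m * (word_val \<Theta> (m - 1) * word_val \<Phi> (m - 1)))"
proof (induction N)
  case 0
  show ?case by simp
next
  case (Suc N)
  show ?case
    unfolding word_val_Cons_Suc sum.cl_ivl_Suc Suc.IH[symmetric]
    by (simp add: letter_val_letter_mul word_val_Cons_Suc algebra_simps)
qed

lemma word_span_mult_word_val: "word_span (\<lambda>N. word_val \<Theta> N * word_val \<Phi> N)"
proof (induction \<Theta> arbitrary: \<Phi>)
  case Nil
  show ?case using in_span_basis[of word_val \<Phi>] by simp
next
  case (Cons L \<Theta>)
  note IH_\<Theta> = Cons.IH
  show ?case
  proof (induction \<Phi>)
    case Nil
    show ?case using in_span_basis[of word_val "L # \<Theta>"] by simp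
  next
    case (Cons M \<Phi>)
    have "word_span (\<lambda>N.
            (\<Sum>m=1..N. letter_val L m * (word_val \<Theta> (m - 1) * word_val (M # \<Phi>) (m - 1)))
          + (\<Sum>m=1..N. letter_val M m * (word_val (L # \<Theta>) (m - 1) * word_val \<Phi> (m - 1)))
          + (\<Sum>m=1..N. letter_val (letter_mul L M) m * (word_val \<Theta> (m - 1) * word_val \<Phi> (m - 1))))"
      by (intro in_span_add word_span_strict_sum_letter[where h = "\<lambda>N. word_val _ N * word_val _ N"]
          IH_\<Theta> Cons.IH)
    then show ?case by (simp add: word_val_quasi_shuffle sum.distrib)
  qed
qed

lemma word_span_mult:
  assumes "word_span f" "word_span g"
  shows "word_span (\<lambda>N. f N * g N)"
  using assms(1)
proof (rule in_span_linear_image[where T = "\<lambda>f N. f N * g N"])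
  show "word_span (\<lambda>N. word_val \<Theta> N * g N)" for \<Theta>
    using assms(2) by (rule in_span_linear_image[where T = "\<lambda>g N. word_val \<Theta> N * g N"])
      (simp_all add: fun_eq_iff algebra_simps word_span_mult_word_val)
qed (simp_all add: fun_eq_iff algebra_simps)

lemma word_span_power: "word_span f \<Longrightarrow> word_span (\<lambda>N. f N ^ e)"
  by (induction e) (simp_all add: word_span_const word_span_mult)

lemma word_span_prod:
  "(\<And>j. j \<in> A \<Longrightarrow> word_span (f j)) \<Longrightarrow> word_span (\<lambda>N. \<Prod>j\<in>A. f j N)"
proof (induction A rule: infinite_finite_induct)
  case (insert j A)
  then show ?case by (simp add: word_span_mult)
qed (simp_all add: word_span_const)

lemma word_span_sum_letter_word_val:
  "word_span (\<lambda>M. \<Sum>m=1..M. letter_val L m * word_val \<Theta> m)"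
proof (cases \<Theta>)
  case Nil
  show ?thesis
    using in_span_basis[of word_val "[L]"] unfolding Nil word_val_Cons[abs_def] word_val_Nil .
next
  case (Cons M \<Phi>)
  have "letter_val L m * word_val \<Theta> m =
          letter_val L m * word_val \<Theta> (m - 1) + letter_val (letter_mul L M) m * word_val \<Phi> (m - 1)"
    if "1 \<le> m" for m
    using that word_val_Cons_Suc[of M \<Phi> "m - 1"]
    by (simp add: Cons letter_val_letter_mul algebra_simps)
  then have "(\<Sum>m=1..N. letter_val L m * word_val \<Theta> m) =
               word_val (L # \<Theta>) N + word_val (letter_mul L M # \<Phi>) N" for N
    by (simp add: word_val_Cons sum.distrib)
  moreover have "word_span (\<lambda>N. word_val (L # \<Theta>) N + word_val (letter_mul L M # \<Phi>) N)"
    by (intro in_span_add in_span_basis)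
  ultimately show ?thesis by simp
qed

lemma word_span_sum_letter:
  assumes "word_span h"
  shows "word_span (\<lambda>M. \<Sum>m=1..M. letter_val L m * h m)"
  using assms
proof (rule in_span_linear_image[where T = "\<lambda>h M. \<Sum>m=1..M. letter_val L m * h m"])
  show "word_span (\<lambda>M. \<Sum>m=1..M. letter_val L m * word_val \<Theta> m)" for \<Theta>
    by (rule word_span_sum_letter_word_val)
qed (simp_all add: fun_eq_iff algebra_simps sum.distrib sum_distrib_left)

lemma word_span_sum:
  assumes "letter_span a" "word_span h"
  shows "word_span (\<lambda>M. \<Sum>m=1..M. a m * h m)"
  using assms(1)
proof (rule in_span_linear_image[where T = "\<lambda>a M. \<Sum>m=1..M. a m * h m"])
  show "word_span (\<lambda>M. \<Sum>m=1..M. letter_val L m * h m)" for L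
    using assms(2) by (rule word_span_sum_letter)
qed (simp_all add: fun_eq_iff algebra_simps sum.distrib sum_distrib_left)

lemma sum_powers_root_unity:
  assumes "0 < r"
  shows "(\<Sum>j<r. exp (2 * of_real pi * \<i> * of_nat m / of_nat r) ^ j) =
           (if r dvd m then of_nat r else (0::complex))"
proof -
  define \<zeta> where "\<zeta> = exp (2 * of_real pi * \<i> * of_nat m / of_nat r)"
  have "\<zeta> ^ r = 1"
    unfolding \<zeta>_def using assms by (simp add: complex_root_unity)
  moreover have "\<zeta> = 1 \<longleftrightarrow> r dvd m"
    unfolding \<zeta>_def using complex_root_unity_eq_1[of r m] assms by simp
  ultimately show ?thesis
    by (fold \<zeta>_def) (auto simp: sum_gp_strict)
qed

lemma letter_span_dilate:
  assumes "0 < r"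
  shows "letter_span (\<lambda>m. if r dvd m then letter_val L (m div r) else 0)"
proof -
  obtain \<sigma> l where L: "L = (\<sigma>, l)" by (cases L)
  obtain s where s: "\<sigma> = s ^ r" using exists_complex_root[of r \<sigma>] assms by auto
  define l' where "l' = map (\<lambda>(\<rho>, Q). (\<rho>, Q \<circ>\<^sub>p [:0, 1 / of_nat r:])) l"
  define F where "F = (\<lambda>x::complex. \<Prod>(\<rho>, Q) \<leftarrow> l. poly Q x powr (- \<rho>))"
  define \<zeta> where "\<zeta> = (\<lambda>j::nat. exp (2 * of_real pi * \<i> * of_nat j / of_nat r))"
  have twisted: "letter_val (s * \<zeta> j, l') m = s ^ m * F (of_nat m / of_nat r) * \<zeta> m ^ j" for j m
  proof -
    have "\<zeta> j ^ m = \<zeta> m ^ j"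
      unfolding \<zeta>_def exp_of_nat_mult[symmetric] by (simp add: field_simps)
    moreover have "(\<Prod>(\<rho>, Q) \<leftarrow> l'. poly Q (of_nat m) powr (- \<rho>)) = F (of_nat m / of_nat r)"
      unfolding l'_def F_def by (simp add: o_def split_def poly_pcompose field_simps)
    ultimately show ?thesis
      by (simp add: letter_val_def power_mult_distrib)
  qed
  have "(\<Sum>j<r. (1 / of_nat r) * letter_val (s * \<zeta> j, l') m) =
          (if r dvd m then letter_val L (m div r) else 0)" for m
  proof -
    have "(\<Sum>j<r. (1 / of_nat r) * letter_val (s * \<zeta> j, l') m) =
            (1 / of_nat r) * s ^ m * F (of_nat m / of_nat r) * (\<Sum>j<r. \<zeta> m ^ j)"
      by (simp add: twisted sum_distrib_left mult.assoc)
    also have "\<dots> = (if r dvd m then s ^ m * F (of_nat m / of_nat r) else 0)"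
      using assms unfolding \<zeta>_def by (simp add: sum_powers_root_unity)
    also have "\<dots> = (if r dvd m then letter_val L (m div r) else 0)"
      using assms by (auto simp: letter_val_def L F_def s power_mult[symmetric])
    finally show ?thesis .
  qed
  moreover have "letter_span (\<lambda>m. \<Sum>j<r. (1 / of_nat r) * letter_val (s * \<zeta> j, l') m)"
    by (intro in_span_sum in_span_scale in_span_basis) simp
  ultimately show ?thesis by simp
qed

lemma sum_multiples:
  fixes r M :: nat
  assumes "0 < r"
  shows "(\<Sum>m=1..M. if r dvd m then F (m div r) else 0) =
           (\<Sum>n=1..M div r. F n :: 'a::comm_monoid_add)"
proof (induction M)
  case (Suc M)
  show ?case
  proof (cases "r dvd Suc M")
    case True
    then have "Suc M div r = Suc (M div r)"
      using assms by (auto simp: div_Suc dvd_eq_mod_eq_0)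
    then show ?thesis using True Suc.IH by simp
  next
    case False
    then have "Suc M div r = M div r"
      by (auto simp: div_Suc dvd_eq_mod_eq_0)
    then show ?thesis using False Suc.IH by simp
  qed
qed simp

lemma word_span_word_val_div:
  assumes "0 < r"
  shows "word_span (\<lambda>m. word_val \<Theta> (m div r))"
proof (induction \<Theta>)
  case Nil
  show ?case by (simp add: word_span_const)
next
  case (Cons L \<Theta>)
  let ?a = "\<lambda>m. if r dvd m then letter_val L (m div r) else 0"
  have "?a m * word_val \<Theta> ((m - 1) div r) =
          (if r dvd m then letter_val L (m div r) * word_val \<Theta> (m div r - 1) else 0)"
    if "1 \<le> m" for m
  proof (cases "r dvd m")
    case True
    then obtain k where "m = r * k" ..
    with that assms have "(m - 1) div r = m div r - 1"
      by (cases k) (auto intro!: div_nat_eqI)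
    then show ?thesis using True by simp
  qed simp
  then have "(\<Sum>m=1..M. ?a m * word_val \<Theta> ((m - 1) div r)) =
               (\<Sum>m=1..M. if r dvd m then letter_val L (m div r) * word_val \<Theta> (m div r - 1) else 0)"
    for M by (intro sum.cong) simp_all
  also have "\<dots> M = word_val (L # \<Theta>) (M div r)" for M
    by (simp only: sum_multiples[OF assms, where F = "\<lambda>n. letter_val L n * word_val \<Theta> (n - 1)"]
        word_val_Cons)
  moreover have "word_span (\<lambda>M. \<Sum>m=1..M. ?a m * word_val \<Theta> ((m - 1) div r))"
    using letter_span_dilate[OF assms] Cons.IH by (rule word_span_strict_sum)
  ultimately show ?case by simp
qed

lemma word_span_sum_multiples:
  assumes "0 < r" "word_span G"
  shows "word_span (\<lambda>M. \<Sum>n=1..M div r. letter_val L n * G (r * n))"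
proof -
  have "(if r dvd m then letter_val L (m div r) else 0) * G m =
          (if r dvd m then letter_val L (m div r) * G (r * (m div r)) else 0)" for m
    by auto
  then have "(\<Sum>m=1..M. (if r dvd m then letter_val L (m div r) else 0) * G m) =
               (\<Sum>n=1..M div r. letter_val L n * G (r * n))" for M
    using sum_multiples[OF assms(1), where F = "\<lambda>n. letter_val L n * G (r * n)"] by simp
  moreover have "word_span (\<lambda>M. \<Sum>m=1..M. (if r dvd m then letter_val L (m div r) else 0) * G m)"
    using letter_span_dilate[OF assms(1)] assms(2) by (rule word_span_sum)
  ultimately show ?thesis by simp
qed

theorem theorem6p3:
  fixes mm :: nat
    and ps :: "nat \<Rightarrow> nat"
    and \<Omega>s :: "nat \<Rightarrow> letter list"
    and es :: "nat \<Rightarrow> nat"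
    and z :: complex
    and Ps :: "(complex \<times> complex poly) list"
  assumes ps_pos: "\<forall>j<mm. ps j > 0"
  defines "p \<equiv> Lcm (ps ` {..<mm})"
  defines "S \<equiv> (\<lambda>k::nat. \<Sum>n=1..k.
              z ^ n * (\<Prod>(q, P) \<leftarrow> Ps. poly P (of_nat n) powr q)
                    * (\<Prod>j<mm. word_val (\<Omega>s j) (ps j * n) ^ es j))"
  shows "\<exists>cs :: (complex \<times> letter list) list. \<forall>k::nat. k \<ge> 1 \<longrightarrow>
           ((\<forall>j<mm. \<forall>L \<in> set (\<Omega>s j). \<forall>(\<rho>, Q) \<in> set (snd L). \<forall>m::nat.
                 1 \<le> m \<and> m \<le> p * k \<longrightarrow>
                 poly Q (of_nat m / of_nat (p div ps j)) \<noteq> 0)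
            \<and> (\<forall>(q, P) \<in> set Ps. \<forall>m::nat. 1 \<le> m \<and> m \<le> p * k \<longrightarrow>
                 poly P (of_nat m / of_nat p) \<noteq> 0))
           \<longrightarrow> S k = (\<Sum>(c, \<Theta>) \<leftarrow> cs. c * word_val \<Theta> (p * k))"
proof -
  have p_pos: "0 < p"
    unfolding p_def using ps_pos by (subst neq0_conv[symmetric], subst Lcm_0_iff) auto
  have ps_dvd_p: "ps j dvd p" if "j < mm" for j
    unfolding p_def using that by (intro dvd_Lcm) auto
  have quotient_pos: "0 < p div ps j" if "j < mm" for j
    using ps_dvd_p[OF that] ps_pos that p_pos by (metis dvd_div_eq_0_iff not_gr0)
  define L0 :: letter where "L0 = (z, map (\<lambda>(q, P). (- q, P)) Ps)"
  have L0: "letter_val L0 n = z ^ n * (\<Prod>(q, P) \<leftarrow> Ps. poly P (of_nat n) powr q)" for n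
    unfolding L0_def letter_val_def by (simp add: o_def split_def)
  define G where "G m = (\<Prod>j<mm. word_val (\<Omega>s j) (m div (p div ps j)) ^ es j)" for m
  have "word_span G"
    unfolding G_def using quotient_pos
    by (intro word_span_prod word_span_power word_span_word_val_div) auto
  have G: "G (p * n) = (\<Prod>j<mm. word_val (\<Omega>s j) (ps j * n) ^ es j)" for n
  proof -
    have "p * n div (p div ps j) = ps j * n" if "j < mm" for j
      using ps_dvd_p[OF that] ps_pos that p_pos by (auto elim!: dvdE)
    then show ?thesis unfolding G_def by simp
  qed
  obtain cs where cs: "\<And>M. (\<Sum>n=1..M div p. letter_val L0 n * G (p * n)) =
                             (\<Sum>(c, \<Theta>) \<leftarrow> cs. c * word_val \<Theta> M)"
    using word_span_sum_multiples[OF p_pos \<open>word_span G\<close>, of L0] by (rule in_spanE) blast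
  have "S k = (\<Sum>(c, \<Theta>) \<leftarrow> cs. c * word_val \<Theta> (p * k))" for k
    using cs[of "p * k"] p_pos by (simp add: S_def L0 G)
  then show ?thesis by blast
qed

end
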